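(* For any $s\ge0$ and $u,v\in\mathcal{A}^s(\mathbb{T}^n)$, $$S_s(uv)\le 2\sum_{m=0}^{[s]}\binom{[s]}{m}\big[S_{s-m}(u)S_m(v)+S_{s-m}(v)S_m(u)\big].$$
   Context: For $u\in C(\mathbb{T}^n)$, $\mathbb{T}^n=\mathbb{R}^n/2\pi\mathbb{Z}^n$, with Fourier coefficients $u_k$, $S_s(u)=\sum_{k\in\mathbb{Z}^n}(1+|k|)^s|u_k|$ where $|k|=\sum|k_j|$; $\mathcal{A}^s(\mathbb{T}^n)=\{u\in C(\mathbb{T}^n):S_s(u)<\infty\}$. $[s]$ denotes the integer part of $s$. *)

theory Defs
  imports "HOL-Analysis.Analysis"
begin

text \<open>Functions on the torus T^n = R^n / 2pi Z^n, represented as 2pi-periodic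
  functions on R^n (dimension n = CARD('n)).\<close>

definition torus_continuous :: "(real^'n \<Rightarrow> complex) \<Rightarrow> bool" where
  "torus_continuous u \<longleftrightarrow> continuous_on UNIV u \<and>
     (\<forall>x i. u (x + (2 * pi) *\<^sub>R axis i 1) = u x)"

definition fourier_coeff :: "(real^'n \<Rightarrow> complex) \<Rightarrow> int^'n \<Rightarrow> complex" where
  "fourier_coeff u k =
     integral (cbox 0 (\<chi> i. 2 * pi))
       (\<lambda>x. u x * exp (- \<i> * complex_of_real (\<Sum>j\<in>UNIV. real_of_int (k $ j) * x $ j)))
     / complex_of_real ((2 * pi) ^ CARD('n))"

definition knorm1 :: "int^'n \<Rightarrow> real" where
  "knorm1 k = (\<Sum>j\<in>UNIV. real_of_int \<bar>k $ j\<bar>)"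

definition S_norm :: "real \<Rightarrow> (real^'n \<Rightarrow> complex) \<Rightarrow> ennreal" where
  "S_norm s u = (\<Sum>\<^sub>\<infinity>k. ennreal ((1 + knorm1 k) powr s * norm (fourier_coeff u k)))"

definition wiener_space :: "real \<Rightarrow> (real^'n \<Rightarrow> complex) set" where
  "wiener_space s = {u. torus_continuous u \<and> S_norm s u < \<infinity>}"

end

theory Submission
  imports Defs
begin

text \<open>
  If the Fourier coefficients of v are absolutely summable, then v is the sum of its Fourier
  series (a continuous function on the torus is determined by its Fourier coefficients, by
  Stone--Weierstrass), so the Fourier coefficients of u v are the convolution
  (u v)_k = sum_j u_(k-j) v_j. With N = [s], t = s - N, A = 1 + |k - j| and B = 1 + |j|, the weight
  satisfies (1 + |k|)^s <= (A + B)^N (A^t + B^t), and expanding (A + B)^N binomially bounds it by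
  sum_m (N choose m) (A^(s-m) B^m + B^(s-m) A^m). Summing against |u_(k-j)| |v_j| over j and k
  turns the two terms into S_(s-m)(u) S_m(v) and S_(s-m)(v) S_m(u). The sums are taken in
  [0, \<infinity>], where they can be rearranged freely; the bound holds even without the factor 2.
\<close>

section \<open>Characters of the torus\<close>

definition int_inner :: "int^'n \<Rightarrow> real^'n \<Rightarrow> real" where
  "int_inner k x = (\<Sum>j\<in>UNIV. real_of_int (k $ j) * x $ j)"

definition fourier_char :: "int^'n \<Rightarrow> real^'n \<Rightarrow> complex" where
  "fourier_char k x = exp (\<i> * complex_of_real (int_inner k x))"

abbreviation period_cube :: "(real^'n) set" where
  "period_cube \<equiv> cbox 0 (\<chi> i. 2 * pi)"

lemma int_inner_add_left: "int_inner (k + l) x = int_inner k x + int_inner l x"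
  by (simp add: int_inner_def sum.distrib algebra_simps)

lemma int_inner_uminus_left: "int_inner (- k) x = - int_inner k x"
  by (simp add: int_inner_def sum_negf)

lemma int_inner_add_right: "int_inner k (x + y) = int_inner k x + int_inner k y"
  by (simp add: int_inner_def sum.distrib algebra_simps)

lemma int_inner_scaleR_axis: "int_inner k (c *\<^sub>R axis i 1) = c * real_of_int (k $ i)"
proof -
  have "real_of_int (k $ j) * (c *\<^sub>R axis i 1) $ j = (if j = i then c * real_of_int (k $ i) else 0)" for j
    by (simp add: axis_def)
  then show ?thesis unfolding int_inner_def by simp
qed

lemma int_inner_axis_left: "int_inner (axis j 1) x = x $ j"
proof -
  have "real_of_int (axis j 1 $ i) * x $ i = (if i = j then x $ i else 0)" for i
    by (simp add: axis_def)
  then show ?thesis unfolding int_inner_def by simp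
qed

lemma fourier_char_add: "fourier_char (k + l) x = fourier_char k x * fourier_char l x"
  by (simp add: fourier_char_def int_inner_add_left distrib_left exp_add)

lemma fourier_char_diff: "fourier_char (k - l) x = fourier_char k x * fourier_char (- l) x"
  using fourier_char_add[of k "- l" x] by simp

lemma fourier_char_zero [simp]: "fourier_char 0 x = 1"
  by (simp add: fourier_char_def int_inner_def)

lemma norm_fourier_char [simp]: "norm (fourier_char k x) = 1"
  by (simp add: fourier_char_def)

lemma continuous_on_fourier_char: "continuous_on S (fourier_char k)"
  unfolding fourier_char_def int_inner_def by (intro continuous_intros)

lemma fourier_char_periodic: "fourier_char k (x + (2 * pi) *\<^sub>R axis i 1) = fourier_char k x"
proof -
  have "fourier_char k (x + (2 * pi) *\<^sub>R axis i 1) =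
      exp (\<i> * complex_of_real (int_inner k x) + \<i> * (of_int (k $ i) * (of_real pi * 2)))"
    by (simp add: fourier_char_def int_inner_add_right int_inner_scaleR_axis algebra_simps)
  also have "\<dots> = fourier_char k x"
    by (simp only: exp_plus_2pin fourier_char_def)
  finally show ?thesis .
qed

lemma fourier_coeff_eq_integral:
  fixes u :: "real^'n \<Rightarrow> complex"
  shows "fourier_coeff u k =
     integral period_cube (\<lambda>x. u x * fourier_char (- k) x) / complex_of_real ((2 * pi) ^ CARD('n))"
  unfolding fourier_coeff_def fourier_char_def int_inner_def by (simp add: sum_negf mult_ac)

lemma has_integral_exp_int_freq:
  fixes m :: real
  assumes "m \<in> \<int>"
  shows "((\<lambda>t. exp (\<i> * complex_of_real (m * t))) has_integral
           (if m = 0 then complex_of_real (2 * pi) else 0)) {0..2 * pi}"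
proof (cases "m = 0")
  case True
  then show ?thesis
    using has_integral_const_real[of "1::complex" 0 "2 * pi"] by (simp add: scaleR_conv_of_real)
next
  case False
  let ?F = "\<lambda>t. exp (\<i> * complex_of_real (m * t)) / (\<i> * complex_of_real m)"
  have "((\<lambda>t. exp (\<i> * complex_of_real (m * t))) has_integral (?F (2 * pi) - ?F 0)) {0..2 * pi}"
  proof (rule fundamental_theorem_of_calculus)
    fix x :: real
    let ?G = "\<lambda>z. exp (\<i> * complex_of_real m * z) / (\<i> * complex_of_real m)"
    have "(?G has_field_derivative exp (\<i> * complex_of_real m * complex_of_real x)) (at (complex_of_real x))"
      using False by (auto intro!: derivative_eq_intros simp: divide_simps)
    from has_vector_derivative_real_field[OF this]
    show "(?F has_vector_derivative exp (\<i> * complex_of_real (m * x))) (at x within {0..2 * pi})"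
      by (simp add: mult_ac)
  qed simp
  moreover have "exp (\<i> * complex_of_real (m * (2 * pi))) = 1"
  proof -
    obtain z where z: "m = of_int z"
      using assms Ints_cases by blast
    have "\<i> * complex_of_real (m * (2 * pi)) = 2 * of_int z * of_real pi * \<i>"
      by (simp add: z mult_ac)
    then show ?thesis
      using exp_integer_2pi[of "of_int z"] by (simp only:) simp
  qed
  ultimately show ?thesis
    using False by simp
qed

lemma
  fixes f :: "'a::euclidean_space \<Rightarrow> real \<Rightarrow> complex"
  assumes int: "\<And>b. b \<in> Basis \<Longrightarrow> integrable lborel (f b)"
  shows integrable_prod_Basis_lborel: "integrable lborel (\<lambda>x::'a. \<Prod>b\<in>Basis. f b (x \<bullet> b))"
    and integral_prod_Basis_lborel:
      "(\<integral>x. (\<Prod>b\<in>Basis. f b (x \<bullet> b)) \<partial>(lborel::'a measure)) = (\<Prod>b\<in>Basis. \<integral>t. f b t \<partial>lborel)"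
proof -
  interpret finite_product_sigma_finite "\<lambda>_. lborel" "Basis::'a set"
    by standard simp
  let ?h = "\<lambda>g. \<Sum>b\<in>Basis. g b *\<^sub>R b :: 'a"
  have [measurable]: "f b \<in> borel_measurable borel" if "b \<in> Basis" for b
    using int[OF that] by auto
  have h[measurable]: "?h \<in> measurable (Pi\<^sub>M Basis (\<lambda>_. lborel)) borel"
    by measurable
  have inner_h: "?h g \<bullet> b = g b" if "b \<in> Basis" for g b
    using that by (simp add: inner_sum_left inner_Basis if_distrib cong: if_cong)
  have F[measurable]: "(\<lambda>x::'a. \<Prod>b\<in>Basis. f b (x \<bullet> b)) \<in> borel_measurable borel"
    by measurable
  have "integrable (Pi\<^sub>M Basis (\<lambda>_. lborel)) (\<lambda>g. \<Prod>b\<in>Basis. f b (g b))"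
    by (rule product_integrable_prod) (auto intro: int)
  then show "integrable lborel (\<lambda>x::'a. \<Prod>b\<in>Basis. f b (x \<bullet> b))"
    by (subst lborel_eq, subst integrable_distr_eq[OF h F]) (simp add: inner_h)
  have "(\<integral>x. (\<Prod>b\<in>Basis. f b (x \<bullet> b)) \<partial>(lborel::'a measure))
      = (\<integral>g. (\<Prod>b\<in>Basis. f b (?h g \<bullet> b)) \<partial>(Pi\<^sub>M Basis (\<lambda>_. lborel)))"
    by (subst lborel_eq, subst integral_distr[OF h F]) simp
  also have "\<dots> = (\<integral>g. (\<Prod>b\<in>Basis. f b (g b)) \<partial>(Pi\<^sub>M Basis (\<lambda>_. lborel)))"
    by (simp add: inner_h)
  also have "\<dots> = (\<Prod>b\<in>Basis. \<integral>t. f b t \<partial>lborel)"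
    by (rule product_integral_prod) (auto intro: int)
  finally show "(\<integral>x. (\<Prod>b\<in>Basis. f b (x \<bullet> b)) \<partial>(lborel::'a measure)) = (\<Prod>b\<in>Basis. \<integral>t. f b t \<partial>lborel)" .
qed

lemma ball_Basis_vec: "(\<forall>b\<in>(Basis::(real^'n) set). P b) \<longleftrightarrow> (\<forall>i. P (axis i 1))"
  by (auto simp: Basis_vec_def)

lemma lborel_integral_exp_int_freq:
  fixes m :: real
  assumes "m \<in> \<int>"
  defines "f \<equiv> \<lambda>t. indicator {0..2 * pi} t * exp (\<i> * complex_of_real (m * t))"
  shows "integrable lborel f" "(\<integral>t. f t \<partial>lborel) = (if m = 0 then complex_of_real (2 * pi) else 0)"
proof -
  have set_int: "set_integrable lborel {0..2 * pi} (\<lambda>t. exp (\<i> * complex_of_real (m * t)))"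
    by (rule borel_integrable_atLeastAtMost') (intro continuous_intros)
  then show "integrable lborel f"
    unfolding set_integrable_def f_def by (simp add: scaleR_conv_of_real of_real_indicator)
  have "(\<integral>t. f t \<partial>lborel) = integral {0..2 * pi} (\<lambda>t. exp (\<i> * complex_of_real (m * t)))"
    using set_borel_integral_eq_integral(2)[OF set_int]
    by (simp add: set_lebesgue_integral_def f_def scaleR_conv_of_real of_real_indicator)
  also have "\<dots> = (if m = 0 then complex_of_real (2 * pi) else 0)"
    by (rule integral_unique[OF has_integral_exp_int_freq[OF assms(1)]])
  finally show "(\<integral>t. f t \<partial>lborel) = (if m = 0 then complex_of_real (2 * pi) else 0)" .
qed

lemma prod_Basis_indicator_period_cube:
  fixes x :: "real^'n"
  shows "(\<Prod>b\<in>Basis. indicator {0..2 * pi} (x \<bullet> b)) = (indicator period_cube x :: complex)"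
proof (cases "x \<in> period_cube")
  case True
  then have "\<forall>b\<in>Basis. x \<bullet> b \<in> {0..2 * pi}"
    by (auto simp: mem_box ball_Basis_vec inner_axis)
  then show ?thesis
    using True by simp
next
  case False
  then obtain i where "x $ i \<notin> {0..2 * pi}"
    by (auto simp: mem_box ball_Basis_vec inner_axis)
  then have "axis i 1 \<in> (Basis :: (real^'n) set)" "x \<bullet> axis i 1 \<notin> {0..2 * pi}"
    by (simp_all add: inner_axis)
  then show ?thesis
    using False by (intro trans[OF prod_zero] bexI[of _ "axis i 1"]) auto
qed

lemma fourier_char_has_integral:
  fixes m :: "int^'n"
  shows "(fourier_char m has_integral (if m = 0 then complex_of_real ((2 * pi) ^ CARD('n)) else 0)) period_cube"
proof -
  define rm :: "real^'n" where "rm = (\<chi> j. real_of_int (m $ j))"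
  define f where "f b t = indicator {0..2 * pi} t * exp (\<i> * complex_of_real ((rm \<bullet> b) * t))"
    for b :: "real^'n" and t :: real
  have rm_Ints: "rm \<bullet> b \<in> \<int>" if "b \<in> Basis" for b
    using that by (auto simp: Basis_vec_def rm_def inner_axis)
  have int_f: "integrable lborel (f b)" if "b \<in> Basis" for b
    unfolding f_def by (rule lborel_integral_exp_int_freq(1)[OF rm_Ints[OF that]])
  have integral_f: "(\<integral>t. f b t \<partial>lborel) = (if rm \<bullet> b = 0 then complex_of_real (2 * pi) else 0)"
    if "b \<in> Basis" for b
    unfolding f_def by (rule lborel_integral_exp_int_freq(2)[OF rm_Ints[OF that]])
  have prod_f: "(\<Prod>b\<in>Basis. f b (x \<bullet> b)) = indicator period_cube x * fourier_char m x" for x :: "real^'n"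
  proof -
    have "(\<Prod>b\<in>Basis. exp (\<i> * complex_of_real ((rm \<bullet> b) * (x \<bullet> b)))) = exp (\<i> * complex_of_real (rm \<bullet> x))"
      by (simp add: exp_sum euclidean_inner[of rm x] sum_distrib_left)
    moreover have "rm \<bullet> x = int_inner m x"
      by (simp add: rm_def int_inner_def inner_vec_def)
    ultimately show ?thesis
      unfolding f_def prod.distrib prod_Basis_indicator_period_cube by (simp add: fourier_char_def)
  qed
  have "((\<lambda>x. \<Prod>b\<in>Basis. f b (x \<bullet> b)) has_integral (\<Prod>b\<in>Basis. \<integral>t. f b t \<partial>lborel)) UNIV"
    using has_integral_integral_lborel[OF integrable_prod_Basis_lborel[of f, OF int_f]]
      integral_prod_Basis_lborel[of f, OF int_f] by simp
  then have "(fourier_char m has_integral (\<Prod>b\<in>Basis. \<integral>t. f b t \<partial>lborel)) period_cube"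
    by (simp add: prod_f indicator_times_eq_if has_integral_restrict_UNIV)
  moreover have "(\<Prod>b\<in>(Basis::(real^'n) set). \<integral>t. f b t \<partial>lborel) =
      (if m = 0 then complex_of_real ((2 * pi) ^ CARD('n)) else 0)"
  proof (cases "m = 0")
    case True
    then have "rm = 0"
      by (simp add: rm_def vec_eq_iff)
    then show ?thesis
      using True by (simp add: integral_f)
  next
    case False
    then obtain j where "m $ j \<noteq> 0"
      by (auto simp: vec_eq_iff)
    then have "axis j 1 \<in> (Basis::(real^'n) set)" "rm \<bullet> axis j 1 \<noteq> 0"
      by (simp_all add: rm_def inner_axis)
    then show ?thesis
      using False by (intro trans[OF prod_zero]) (auto simp: integral_f intro!: bexI[of _ "axis j 1"])
  qed
  ultimately show ?thesis
    by simp
qed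

section \<open>Uniqueness of Fourier coefficients\<close>

lemma torus_continuous_periodic_int:
  assumes "torus_continuous u"
  shows "u (x + (2 * pi * real_of_int z) *\<^sub>R axis i 1) = u x"
proof -
  have step: "u (y + (2 * pi) *\<^sub>R axis i 1) = u y" for y
    using assms by (simp add: torus_continuous_def)
  show ?thesis
  proof (induction z arbitrary: x rule: int_induct[where k = 0])
    case base
    then show ?case by simp
  next
    case (step1 z)
    have "x + (2 * pi * real_of_int (z + 1)) *\<^sub>R axis i 1 =
        (x + (2 * pi * real_of_int z) *\<^sub>R axis i 1) + (2 * pi) *\<^sub>R axis i 1"
      by (simp add: algebra_simps)
    then show ?case
      using step step1.IH by metis
  next
    case (step2 z)
    have "x + (2 * pi * real_of_int z) *\<^sub>R axis i 1 =
        (x + (2 * pi * real_of_int (z - 1)) *\<^sub>R axis i 1) + (2 * pi) *\<^sub>R axis i 1"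
      by (simp add: algebra_simps)
    then show ?case
      using step step2.IH by metis
  qed
qed

lemma torus_continuous_periodic:
  fixes z :: "int^'n"
  assumes "torus_continuous u"
  shows "u (x + (\<chi> j. 2 * pi * real_of_int (z $ j))) = u x"
proof -
  let ?a = "\<lambda>j. (2 * pi * real_of_int (z $ j)) *\<^sub>R axis j 1"
  have "u (x + sum ?a J) = u x" if "finite J" for J x
    using that
  proof (induction J arbitrary: x rule: finite_induct)
    case (insert j J)
    then have "u (x + sum ?a (insert j J)) = u ((x + sum ?a J) + ?a j)"
      by (simp add: ac_simps)
    also have "\<dots> = u (x + sum ?a J)"
      by (rule torus_continuous_periodic_int[OF assms])
    also have "\<dots> = u x"
      by (rule insert.IH)
    finally show ?case .
  qed simp
  moreover have "sum ?a UNIV = (\<chi> j. 2 * pi * real_of_int (z $ j))"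
    using basis_expansion[of "\<chi> j. 2 * pi * real_of_int (z $ j)"] by (simp add: scalar_mult_eq_scaleR)
  ultimately show ?thesis
    using finite_class.finite_UNIV by metis
qed

lemma torus_continuous_cube_representative:
  fixes u :: "real^'n \<Rightarrow> complex"
  assumes "torus_continuous u"
  obtains y where "y \<in> period_cube" "u y = u x"
proof
  define z :: "int^'n" where "z = (\<chi> j. - \<lfloor>x $ j / (2 * pi)\<rfloor>)"
  show "u (x + (\<chi> j. 2 * pi * real_of_int (z $ j))) = u x"
    by (rule torus_continuous_periodic[OF assms])
  have "0 \<le> x $ j - 2 * pi * \<lfloor>x $ j / (2 * pi)\<rfloor> \<and> x $ j - 2 * pi * \<lfloor>x $ j / (2 * pi)\<rfloor> \<le> 2 * pi" for j
  proof -
    have "real_of_int \<lfloor>x $ j / (2 * pi)\<rfloor> * (2 * pi) \<le> x $ j"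
      "x $ j < (real_of_int \<lfloor>x $ j / (2 * pi)\<rfloor> + 1) * (2 * pi)"
      by (simp_all only: floor_divide_lower floor_divide_upper pi_gt_zero mult_pos_pos zero_less_numeral)
    then show ?thesis
      by (simp add: algebra_simps)
  qed
  then show "x + (\<chi> j. 2 * pi * real_of_int (z $ j)) \<in> period_cube"
    by (simp add: mem_box_cart z_def)
qed

inductive trig_poly :: "(real^'n \<Rightarrow> complex) \<Rightarrow> bool" where
  char: "trig_poly (\<lambda>x. c * fourier_char k x)"
| add: "trig_poly f \<Longrightarrow> trig_poly g \<Longrightarrow> trig_poly (\<lambda>x. f x + g x)"

lemma trig_poly_const: "trig_poly (\<lambda>x. c)"
  using trig_poly.char[of c 0] by simp

lemma continuous_on_trig_poly: "trig_poly f \<Longrightarrow> continuous_on S f"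
  by (induction rule: trig_poly.induct) (intro continuous_intros continuous_on_fourier_char)+

lemma trig_poly_mult:
  assumes "trig_poly f" "trig_poly g"
  shows "trig_poly (\<lambda>x. f x * g x)"
  using assms
proof (induction rule: trig_poly.induct)
  case (char c k)
  from \<open>trig_poly g\<close> show ?case
  proof (induction rule: trig_poly.induct)
    case (char d l)
    have "(\<lambda>x. c * fourier_char k x * (d * fourier_char l x)) = (\<lambda>x. (c * d) * fourier_char (k + l) x)"
      by (simp add: fourier_char_add mult_ac)
    then show ?case
      by (simp add: trig_poly.char)
  next
    case (add g1 g2)
    then show ?case
      using trig_poly.add[OF add.IH] by (simp add: distrib_left)
  qed
next
  case (add f1 f2)
  then show ?case
    using trig_poly.add[OF add.IH] by (simp add: distrib_right)
qed

lemma trig_poly_sum: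
  "finite I \<Longrightarrow> (\<And>i. i \<in> I \<Longrightarrow> trig_poly (f i)) \<Longrightarrow> trig_poly (\<lambda>x. \<Sum>i\<in>I. f i x)"
proof (induction I rule: finite_induct)
  case empty
  then show ?case
    using trig_poly_const[of 0] by simp
next
  case (insert i I)
  then show ?case
    using trig_poly.add[of "f i" "\<lambda>x. \<Sum>i\<in>I. f i x"] by simp
qed

lemma trig_poly_cos: "trig_poly (\<lambda>x. complex_of_real (cos (x $ j)))"
proof -
  have "complex_of_real (cos (x $ j)) =
      (1 / 2) * fourier_char (axis j 1) x + (1 / 2) * fourier_char (- axis j 1) x" for x
    by (simp add: cos_of_real[symmetric] cos_exp_eq fourier_char_def int_inner_axis_left
        int_inner_uminus_left field_simps)
  then have "(\<lambda>x. complex_of_real (cos (x $ j))) =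
      (\<lambda>x. (1 / 2) * fourier_char (axis j 1) x + (1 / 2) * fourier_char (- axis j 1) x)"
    by (rule ext)
  then show ?thesis
    by (simp only:) (rule trig_poly.add trig_poly.char)+
qed

lemma trig_poly_sin: "trig_poly (\<lambda>x. complex_of_real (sin (x $ j)))"
proof -
  have "complex_of_real (sin (x $ j)) =
      (1 / (2 * \<i>)) * fourier_char (axis j 1) x + (- 1 / (2 * \<i>)) * fourier_char (- axis j 1) x" for x
    by (simp add: sin_of_real[symmetric] sin_exp_eq fourier_char_def int_inner_axis_left
        int_inner_uminus_left field_simps)
  then have "(\<lambda>x. complex_of_real (sin (x $ j))) =
      (\<lambda>x. (1 / (2 * \<i>)) * fourier_char (axis j 1) x + (- 1 / (2 * \<i>)) * fourier_char (- axis j 1) x)"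
    by (rule ext)
  then show ?thesis
    by (simp only:) (rule trig_poly.add trig_poly.char)+
qed

text \<open>
  Trigonometric polynomials do not separate opposite faces of the period cube, so
  Stone--Weierstrass is applied on the image of the cube under this embedding of the torus.
\<close>

definition torus_embedding :: "real^'n \<Rightarrow> (real^'n) \<times> (real^'n)" where
  "torus_embedding x = ((\<chi> j. cos (x $ j)), (\<chi> j. sin (x $ j)))"

lemma continuous_on_torus_embedding: "continuous_on S torus_embedding"
  unfolding torus_embedding_def by (intro continuous_intros continuous_on_vec_lambda)

lemma torus_continuous_eq_if_torus_embedding_eq:
  fixes u :: "real^'n \<Rightarrow> complex"
  assumes "torus_continuous u" "torus_embedding x = torus_embedding y"
  shows "u x = u y"
proof -
  have "\<exists>n::int. x $ j = y $ j + 2 * pi * n" for j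
  proof -
    from assms(2) have "cos (x $ j) = cos (y $ j)" "sin (x $ j) = sin (y $ j)"
      unfolding torus_embedding_def by (auto simp: vec_eq_iff)
    then show ?thesis
      using sin_cos_eq_iff[of "x $ j" "y $ j"] by simp
  qed
  then obtain N where N: "\<And>j. x $ j = y $ j + 2 * pi * real_of_int (N j)"
    by metis
  define z :: "int^'n" where "z = (\<chi> j. N j)"
  have "x = y + (\<chi> j. 2 * pi * real_of_int (z $ j))"
    by (simp add: vec_eq_iff z_def N)
  then show ?thesis
    using torus_continuous_periodic[OF assms(1), of y z] by simp
qed

lemma bounded_linear_pair_expansion:
  fixes L :: "(real^'n) \<times> (real^'n) \<Rightarrow> real"
  assumes "bounded_linear L"
  shows "L (a, b) = (\<Sum>j\<in>UNIV. a $ j * L (axis j 1, 0) + b $ j * L (0, axis j 1))"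
proof -
  interpret bounded_linear L by fact
  have "(\<Sum>j\<in>UNIV. a $ j *\<^sub>R (axis j 1, 0) + b $ j *\<^sub>R (0, axis j 1)) =
      ((\<Sum>j\<in>UNIV. a $ j *s axis j 1), (\<Sum>j\<in>UNIV. b $ j *s axis j 1))"
    by (simp add: prod_eq_iff fst_sum snd_sum scalar_mult_eq_scaleR)
  then have "(a, b) = (\<Sum>j\<in>UNIV. a $ j *\<^sub>R (axis j 1, 0) + b $ j *\<^sub>R (0, axis j 1))"
    by (simp add: basis_expansion)
  then have "L (a, b) = L (\<Sum>j\<in>UNIV. a $ j *\<^sub>R (axis j 1, 0) + b $ j *\<^sub>R (0, axis j 1))"
    by simp
  also have "\<dots> = (\<Sum>j\<in>UNIV. a $ j * L (axis j 1, 0) + b $ j * L (0, axis j 1))"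
    by (simp only: sum add scaleR real_scaleR_def)
  finally show ?thesis .
qed

lemma trig_poly_polynomial_function:
  assumes "real_polynomial_function p"
  shows "trig_poly (\<lambda>x. complex_of_real (p (torus_embedding x)))"
  using assms
proof (induction rule: real_polynomial_function.induct)
  case (linear L)
  have L_expand: "L (torus_embedding x) =
      (\<Sum>j\<in>UNIV. cos (x $ j) * L (axis j 1, 0) + sin (x $ j) * L (0, axis j 1))" for x
    unfolding torus_embedding_def by (subst bounded_linear_pair_expansion[OF linear]) simp
  have eq: "(\<lambda>x. complex_of_real (L (torus_embedding x))) =
      (\<lambda>x. \<Sum>j\<in>UNIV. complex_of_real (L (axis j 1, 0)) * complex_of_real (cos (x $ j))
                    + complex_of_real (L (0, axis j 1)) * complex_of_real (sin (x $ j)))"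
    by (simp only: L_expand of_real_sum of_real_add of_real_mult mult.commute)
  show ?case
    unfolding eq
  proof (rule trig_poly_sum[OF finite_class.finite_UNIV])
    fix j
    show "trig_poly (\<lambda>x. complex_of_real (L (axis j 1, 0)) * complex_of_real (cos (x $ j))
        + complex_of_real (L (0, axis j 1)) * complex_of_real (sin (x $ j)))"
      by (rule trig_poly.add; rule trig_poly_mult[OF trig_poly_const]; rule trig_poly_cos trig_poly_sin)
  qed
next
  case (const c)
  show ?case
    by (rule trig_poly_const)
next
  case (add f g)
  show ?case
    unfolding of_real_add by (rule trig_poly.add[OF add.IH])
next
  case (mult f g)
  show ?case
    unfolding of_real_mult by (rule trig_poly_mult[OF mult.IH])
qed

lemma continuous_factor_through_compact:
  fixes p :: "'a::topological_space \<Rightarrow> 'b::metric_space" and f :: "'a \<Rightarrow> 'c::topological_space"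
  assumes "compact S" "continuous_on S p" "continuous_on S f"
    and "\<And>x y. x \<in> S \<Longrightarrow> y \<in> S \<Longrightarrow> p x = p y \<Longrightarrow> f x = f y"
  obtains g where "continuous_on (p ` S) g" "\<And>x. x \<in> S \<Longrightarrow> g (p x) = f x"
proof -
  define g where "g z = f (SOME x. x \<in> S \<and> p x = z)" for z
  have g_p: "g (p x) = f x" if "x \<in> S" for x
  proof -
    let ?y = "SOME y. y \<in> S \<and> p y = p x"
    have "?y \<in> S \<and> p ?y = p x"
      by (rule someI[of _ x]) (simp add: that)
    then have "f ?y = f x"
      using assms(4) that by blast
    then show ?thesis
      by (simp add: g_def)
  qed
  have quotient: "quotient_map (top_of_set S) (top_of_set (p ` S)) p"
  proof (rule continuous_imp_quotient_map)
    show "continuous_map (top_of_set S) (top_of_set (p ` S)) p"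
      using assms(2) by simp
    show "compact_space (top_of_set S)"
      using assms(1) by (simp add: compact_space_subtopology compactin_euclidean_iff)
    show "Hausdorff_space (top_of_set (p ` S))"
      by (intro Hausdorff_space_subtopology Hausdorff_space_euclidean)
  qed simp
  have "continuous_on S (g \<circ> p)"
    by (rule continuous_on_eq[OF assms(3)]) (simp add: g_p)
  then have "continuous_map (top_of_set (p ` S)) euclidean g"
    by (intro continuous_compose_quotient_map[OF quotient]) simp
  then have "continuous_on (p ` S) g"
    by simp
  then show thesis
    using g_p by (rule that)
qed
lemma trig_poly_approx:
  fixes f :: "real^'n \<Rightarrow> complex"
  assumes "torus_continuous f" "e > 0"
  obtains P :: "real^'n \<Rightarrow> complex"
  where "trig_poly P" "\<And>x::real^'n. x \<in> period_cube \<Longrightarrow> norm (f x - P x) < e"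
proof -
  have "continuous_on period_cube f"
    using assms(1) by (auto simp: torus_continuous_def intro: continuous_on_subset)
  moreover have "f x = f y" if "torus_embedding x = torus_embedding y" for x y :: "real^'n"
    using torus_continuous_eq_if_torus_embedding_eq[OF assms(1) that] .
  ultimately obtain G where G: "continuous_on (torus_embedding ` period_cube) G"
    "\<And>x::real^'n. x \<in> period_cube \<Longrightarrow> G (torus_embedding x) = f x"
    using continuous_factor_through_compact[OF compact_cbox continuous_on_torus_embedding] by metis
  have K: "compact (torus_embedding ` period_cube)"
    by (intro compact_continuous_image continuous_on_torus_embedding compact_cbox)
  obtain p1 where p1: "real_polynomial_function p1"
    "\<And>z. z \<in> torus_embedding ` period_cube \<Longrightarrow> \<bar>Re (G z) - p1 z\<bar> < e / 2"
    using Stone_Weierstrass_real_polynomial_function[OF K continuous_on_Re[OF G(1)]] assms(2)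
    by (metis half_gt_zero)
  obtain p2 where p2: "real_polynomial_function p2"
    "\<And>z. z \<in> torus_embedding ` period_cube \<Longrightarrow> \<bar>Im (G z) - p2 z\<bar> < e / 2"
    using Stone_Weierstrass_real_polynomial_function[OF K continuous_on_Im[OF G(1)]] assms(2)
    by (metis half_gt_zero)
  define P where "P x = complex_of_real (p1 (torus_embedding x)) + \<i> * complex_of_real (p2 (torus_embedding x))"
    for x :: "real^'n"
  show ?thesis
  proof
    show "trig_poly P"
      unfolding P_def
      by (intro trig_poly.add trig_poly_mult trig_poly_const trig_poly_polynomial_function p1(1) p2(1))
    fix x :: "real^'n"
    assume x: "x \<in> period_cube"
    have "f x - P x = complex_of_real (Re (f x) - p1 (torus_embedding x)) +
        \<i> * complex_of_real (Im (f x) - p2 (torus_embedding x))"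
      by (simp add: P_def complex_eq_iff)
    also have "norm \<dots> \<le> \<bar>Re (f x) - p1 (torus_embedding x)\<bar> + \<bar>Im (f x) - p2 (torus_embedding x)\<bar>"
      by (rule norm_triangle_ineq[THEN order_trans]) (simp add: norm_mult del: of_real_diff)
    also have "\<dots> < e"
      using p1(2)[of "torus_embedding x"] p2(2)[of "torus_embedding x"] G(2)[OF x] x by fastforce
    finally show "norm (f x - P x) < e" .
  qed
qed

lemma integral_mult_trig_poly_eq_0:
  fixes f :: "real^'n \<Rightarrow> complex"
  assumes cont: "continuous_on period_cube f" and coeff: "\<And>k. fourier_coeff f k = 0" and "trig_poly P"
  shows "integral period_cube (\<lambda>x. f x * P x) = 0"
  using \<open>trig_poly P\<close>
proof (induction rule: trig_poly.induct)
  case (char c k)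
  have "integral period_cube (\<lambda>x. f x * fourier_char k x) = 0"
    using coeff[of "- k"] by (simp add: fourier_coeff_eq_integral)
  then show ?case
    by (simp add: mult.left_commute[of _ c])
next
  case (add P1 P2)
  have "(\<lambda>x. f x * P1 x) integrable_on period_cube" "(\<lambda>x. f x * P2 x) integrable_on period_cube"
    by (intro integrable_continuous continuous_intros cont continuous_on_trig_poly[OF add.hyps(1)]
        continuous_on_trig_poly[OF add.hyps(2)])+
  then show ?case
    using add.IH by (simp add: distrib_left integral_add)
qed

lemma torus_continuous_cnj: "torus_continuous f \<Longrightarrow> torus_continuous (\<lambda>x. cnj (f x))"
  by (auto simp: torus_continuous_def intro: continuous_intros)

text \<open>
  By orthogonality, the integral of f * cnj f equals that of f * (cnj f - P) for every
  trigonometric polynomial P, which is small when P approximates cnj f uniformly.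
\<close>

lemma integral_mult_cnj_eq_0_if_fourier_coeff_eq_0:
  fixes f :: "real^'n \<Rightarrow> complex"
  assumes tc: "torus_continuous f" and coeff: "\<And>k. fourier_coeff f k = 0"
  shows "integral period_cube (\<lambda>x. f x * cnj (f x)) = 0"
proof -
  have cont: "continuous_on period_cube f"
    using tc by (auto simp: torus_continuous_def intro: continuous_on_subset)
  obtain B where B: "B > 0" "\<And>x. x \<in> period_cube \<Longrightarrow> norm (f x) \<le> B"
    using compact_imp_bounded[OF compact_continuous_image[OF cont compact_cbox]]
    by (auto simp: bounded_pos)
  define V where "V = Henstock_Kurzweil_Integration.content (period_cube :: (real^'n) set)"
  define I where "I = integral period_cube (\<lambda>x. f x * cnj (f x))"
  have "norm I \<le> e" if "e > 0" for e
  proof -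
    define d where "d = e / (B * V + 1)"
    have BV: "0 \<le> B * V"
      using B by (simp add: V_def)
    have "B * d * V = e * (B * V / (B * V + 1))"
      by (simp add: d_def)
    also have "\<dots> \<le> e"
      using \<open>e > 0\<close> BV by (intro mult_left_le) auto
    finally have d: "d > 0" "B * d * V \<le> e"
      using \<open>e > 0\<close> BV by (auto simp: d_def)
    then obtain P where P: "trig_poly P" "\<And>x. x \<in> period_cube \<Longrightarrow> norm (cnj (f x) - P x) < d"
      using trig_poly_approx[OF torus_continuous_cnj[OF tc]] by metis
    have "I = integral period_cube (\<lambda>x. f x * cnj (f x)) - integral period_cube (\<lambda>x. f x * P x)"
      by (simp add: I_def integral_mult_trig_poly_eq_0[OF cont coeff P(1)])
    also have "\<dots> = integral period_cube (\<lambda>x. f x * (cnj (f x) - P x))"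
      by (subst integral_diff[symmetric])
        (auto intro!: integrable_continuous continuous_intros cont continuous_on_trig_poly[OF P(1)]
          simp: right_diff_distrib)
    also have "norm \<dots> \<le> B * d * V"
      unfolding V_def
    proof (rule has_integral_bound[OF _ integrable_integral])
      show "(\<lambda>x. f x * (cnj (f x) - P x)) integrable_on period_cube"
        by (intro integrable_continuous continuous_intros cont continuous_on_trig_poly[OF P(1)])
      show "norm (f x * (cnj (f x) - P x)) \<le> B * d" if "x \<in> period_cube" for x
        unfolding norm_mult using B P(2)[OF that] that by (intro mult_mono) auto
    qed (use B d in simp)
    also have "\<dots> \<le> e"
      by (rule d(2))
    finally show ?thesis .
  qed
  then show ?thesis
    unfolding I_def[symmetric] by (metis norm_le_zero_iff field_le_epsilon add_0)
qed

lemma fourier_coeff_eq_0_imp_eq_0: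
  fixes f :: "real^'n \<Rightarrow> complex"
  assumes tc: "torus_continuous f" and coeff: "\<And>k. fourier_coeff f k = 0"
  shows "f x = 0"
proof -
  have cont: "continuous_on period_cube f"
    using tc by (auto simp: torus_continuous_def intro: continuous_on_subset)
  have "((\<lambda>x. (norm (f x))\<^sup>2) has_integral integral period_cube (\<lambda>x. (norm (f x))\<^sup>2)) period_cube"
    by (intro integrable_integral integrable_continuous continuous_intros cont)
  from has_integral_of_real[OF this, where 'b = complex]
  have "integral period_cube (\<lambda>x. f x * cnj (f x)) = complex_of_real (integral period_cube (\<lambda>x. (norm (f x))\<^sup>2))"
    unfolding complex_norm_square by (rule integral_unique)
  then have "integral period_cube (\<lambda>x. (norm (f x))\<^sup>2) = 0"
    using integral_mult_cnj_eq_0_if_fourier_coeff_eq_0[OF tc coeff] by simp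
  then have zero_on_cube: "\<forall>y\<in>period_cube. (norm (f y))\<^sup>2 = 0"
    by (subst (asm) integral_cbox_eq_0_iff)
      (auto intro!: continuous_intros cont simp: box_ne_empty ball_Basis_vec inner_axis)
  obtain y where "y \<in> period_cube" "f y = f x"
    using torus_continuous_cube_representative[OF tc] .
  then show ?thesis
    using zero_on_cube by auto
qed

section \<open>Absolutely convergent Fourier series\<close>

lemma
  fixes c h :: "'k \<Rightarrow> complex"
  assumes summable: "(\<lambda>k. norm (c k)) summable_on UNIV" and bound: "\<And>k. norm (h k) \<le> M"
  shows summable_on_mult_bounded: "(\<lambda>k. c k * h k) summable_on UNIV"
    and norm_infsum_minus_sum_mult_bounded_le:
      "finite F \<Longrightarrow> norm ((\<Sum>\<^sub>\<infinity>k. c k * h k) - (\<Sum>k\<in>F. c k * h k)) \<le>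
         M * ((\<Sum>\<^sub>\<infinity>k. norm (c k)) - (\<Sum>k\<in>F. norm (c k)))"
proof -
  have norm_summable: "(\<lambda>k. norm (c k) * M) summable_on A" for A
    by (intro summable_on_cmult_left summable_on_subset[OF summable]) auto
  have "(\<lambda>k. norm (c k * h k)) summable_on UNIV"
    by (rule summable_on_comparison_test[OF norm_summable])
      (auto simp: norm_mult intro: mult_left_mono bound)
  then show prod_summable: "(\<lambda>k. c k * h k) summable_on UNIV"
    by (rule abs_summable_summable)
  assume "finite F"
  have tail: "(\<Sum>\<^sub>\<infinity>k. g k) - (\<Sum>k\<in>F. g k) = (\<Sum>\<^sub>\<infinity>k\<in>- F. g k)" if "g summable_on UNIV"
    for g :: "'k \<Rightarrow> 'b::banach"
  proof -
    have "g summable_on - F"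
      by (rule summable_on_subset_banach[OF that]) auto
    then show ?thesis
      using infsum_Un_disjoint[of g F "- F"] \<open>finite F\<close> by (simp add: Un_commute)
  qed
  have "norm (\<Sum>\<^sub>\<infinity>k\<in>- F. c k * h k) \<le> (\<Sum>\<^sub>\<infinity>k\<in>- F. norm (c k) * M)"
    by (rule norm_infsum_le[OF has_sum_infsum has_sum_infsum])
      (auto intro: summable_on_subset_banach[OF prod_summable] norm_summable simp: norm_mult
        intro!: mult_left_mono bound)
  also have "\<dots> = M * (\<Sum>\<^sub>\<infinity>k\<in>- F. norm (c k))"
    by (simp add: mult.commute infsum_cmult_right')
  finally show "norm ((\<Sum>\<^sub>\<infinity>k. c k * h k) - (\<Sum>k\<in>F. c k * h k)) \<le>
      M * ((\<Sum>\<^sub>\<infinity>k. norm (c k)) - (\<Sum>k\<in>F. norm (c k)))"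
    by (simp add: tail[OF prod_summable] tail[OF summable])
qed

lemma uniform_limit_infsum_mult_bounded:
  fixes c :: "'k \<Rightarrow> complex" and g :: "'k \<Rightarrow> 'a \<Rightarrow> complex"
  assumes summable: "(\<lambda>k. norm (c k)) summable_on UNIV" and bound: "\<And>k x. x \<in> A \<Longrightarrow> norm (g k x) \<le> M"
  shows "uniform_limit A (\<lambda>F x. \<Sum>k\<in>F. c k * g k x) (\<lambda>x. \<Sum>\<^sub>\<infinity>k. c k * g k x)
           (finite_subsets_at_top UNIV)"
proof (rule uniform_limitI)
  fix e :: real
  assume "e > 0"
  define N where "N = (\<Sum>\<^sub>\<infinity>k. norm (c k))"
  have "((\<lambda>F. \<Sum>k\<in>F. norm (c k)) \<longlongrightarrow> N) (finite_subsets_at_top UNIV)"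
    using has_sum_infsum[OF summable] unfolding N_def has_sum_def .
  moreover have "e / (\<bar>M\<bar> + 1) > 0"
    using \<open>e > 0\<close> by simp
  ultimately have "\<forall>\<^sub>F F in finite_subsets_at_top UNIV. dist (\<Sum>k\<in>F. norm (c k)) N < e / (\<bar>M\<bar> + 1)"
    by (rule tendstoD)
  moreover have "\<forall>\<^sub>F F in finite_subsets_at_top UNIV. finite F"
    by (rule eventually_finite_subsets_at_top_weakI)
  ultimately show "\<forall>\<^sub>F F in finite_subsets_at_top UNIV.
      \<forall>x\<in>A. dist (\<Sum>k\<in>F. c k * g k x) (\<Sum>\<^sub>\<infinity>k. c k * g k x) < e"
  proof eventually_elim
    case (elim F)
    show ?case
    proof
      fix x
      assume "x \<in> A"
      have "\<bar>M\<bar> * (N - (\<Sum>k\<in>F. norm (c k))) \<le> \<bar>M\<bar> * (e / (\<bar>M\<bar> + 1))"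
        using elim(1) by (intro mult_left_mono) (auto simp: dist_real_def)
      also have "\<dots> < e"
        using \<open>e > 0\<close> by (simp add: field_simps)
      finally show "dist (\<Sum>k\<in>F. c k * g k x) (\<Sum>\<^sub>\<infinity>k. c k * g k x) < e"
        using norm_infsum_minus_sum_mult_bounded_le[OF summable, of "\<lambda>k. g k x" "\<bar>M\<bar>" F]
          bound[OF \<open>x \<in> A\<close>] elim(2)
        by (force simp: dist_norm norm_minus_commute N_def intro: order_trans abs_ge_self)
    qed
  qed
qed

lemma has_sum_integral_infsum_mult_bounded:
  fixes c :: "'k \<Rightarrow> complex" and g :: "'k \<Rightarrow> 'a::euclidean_space \<Rightarrow> complex"
  assumes summable: "(\<lambda>k. norm (c k)) summable_on UNIV"
    and cont: "\<And>k. continuous_on (cbox a b) (g k)"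
    and bound: "\<And>k x. x \<in> cbox a b \<Longrightarrow> norm (g k x) \<le> M"
  shows "((\<lambda>k. c k * integral (cbox a b) (g k)) has_sum
           integral (cbox a b) (\<lambda>x. \<Sum>\<^sub>\<infinity>k. c k * g k x)) UNIV"
proof -
  define S where "S F x = (\<Sum>k\<in>F. c k * g k x)" for F x
  define T where "T x = (\<Sum>\<^sub>\<infinity>k. c k * g k x)" for x
  have "uniform_limit (cbox a b) S T (finite_subsets_at_top UNIV)"
    unfolding S_def T_def by (rule uniform_limit_infsum_mult_bounded[OF summable bound])
  moreover have "continuous_on (cbox a b) (S F)" for F
    unfolding S_def by (intro continuous_intros cont)
  ultimately obtain I J where I: "\<And>F. (S F has_integral I F) (cbox a b)"
    and J: "(T has_integral J) (cbox a b)" and IJ: "(I \<longlongrightarrow> J) (finite_subsets_at_top UNIV)"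
    using uniform_limit_integral_cbox finite_subsets_at_top_neq_bot by metis
  have "\<forall>\<^sub>F F in finite_subsets_at_top UNIV. I F = (\<Sum>k\<in>F. c k * integral (cbox a b) (g k))"
  proof (rule eventually_finite_subsets_at_top_weakI)
    fix F :: "'k set"
    assume "finite F"
    then have "(S F has_integral (\<Sum>k\<in>F. c k * integral (cbox a b) (g k))) (cbox a b)"
      unfolding S_def by (intro has_integral_sum has_integral_mult_right integrable_integral integrable_continuous cont)
    then show "I F = (\<Sum>k\<in>F. c k * integral (cbox a b) (g k))"
      using I by (rule has_integral_unique[symmetric])
  qed
  with IJ have "((\<lambda>F. \<Sum>k\<in>F. c k * integral (cbox a b) (g k)) \<longlongrightarrow> J) (finite_subsets_at_top UNIV)"
    by (rule Lim_transform_eventually)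
  then show ?thesis
    unfolding has_sum_def using integral_unique[OF J] by (simp add: T_def[abs_def])
qed

lemma fourier_coeff_diff:
  fixes u v :: "real^'n \<Rightarrow> complex"
  assumes "continuous_on period_cube u" "continuous_on period_cube v"
  shows "fourier_coeff (\<lambda>x. u x - v x) k = fourier_coeff u k - fourier_coeff v k"
proof -
  have "(\<lambda>x. u x * fourier_char (- k) x) integrable_on period_cube"
    "(\<lambda>x. v x * fourier_char (- k) x) integrable_on period_cube"
    by (intro integrable_continuous continuous_intros assms continuous_on_fourier_char)+
  then show ?thesis
    unfolding fourier_coeff_eq_integral by (simp add: left_diff_distrib diff_divide_distrib integral_diff)
qed

lemma torus_continuous_infsum_char:
  fixes c :: "int^'n \<Rightarrow> complex"
  assumes "(\<lambda>k. norm (c k)) summable_on UNIV"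
  shows "torus_continuous (\<lambda>x. \<Sum>\<^sub>\<infinity>k. c k * fourier_char k x)"
proof -
  have "continuous_on UNIV (\<lambda>x. \<Sum>\<^sub>\<infinity>k. c k * fourier_char k x)"
  proof (rule uniform_limit_theorem[OF _ uniform_limit_infsum_mult_bounded[OF assms, where M = 1]])
    show "\<forall>\<^sub>F F in finite_subsets_at_top UNIV. continuous_on UNIV (\<lambda>x. \<Sum>k\<in>F. c k * fourier_char k x)"
      by (intro always_eventually allI continuous_on_sum continuous_on_mult continuous_on_const
          continuous_on_fourier_char)
  qed (simp_all add: finite_subsets_at_top_neq_bot)
  then show ?thesis
    unfolding torus_continuous_def by (simp add: fourier_char_periodic)
qed

lemma fourier_coeff_infsum_char:
  fixes c :: "int^'n \<Rightarrow> complex"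
  assumes summable: "(\<lambda>k. norm (c k)) summable_on UNIV"
  shows "fourier_coeff (\<lambda>x. \<Sum>\<^sub>\<infinity>j. c j * fourier_char j x) k = c k"
proof -
  define V where "V = complex_of_real ((2 * pi) ^ CARD('n))"
  have shift: "(\<Sum>\<^sub>\<infinity>j. c j * fourier_char j x) * fourier_char (- k) x = (\<Sum>\<^sub>\<infinity>j. c j * fourier_char (j - k) x)"
    for x
  proof -
    have "(\<Sum>\<^sub>\<infinity>j. c j * fourier_char j x) * fourier_char (- k) x =
        (\<Sum>\<^sub>\<infinity>j. c j * fourier_char j x * fourier_char (- k) x)"
      by (rule infsum_cmult_left[symmetric], rule summable_on_mult_bounded[OF summable, where M = 1]) simp
    then show ?thesis
      by (simp add: fourier_char_diff mult.assoc)
  qed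
  have "((\<lambda>j. c j * integral period_cube (fourier_char (j - k))) has_sum
      integral period_cube (\<lambda>x. \<Sum>\<^sub>\<infinity>j. c j * fourier_char (j - k) x)) UNIV"
    by (rule has_sum_integral_infsum_mult_bounded[OF summable continuous_on_fourier_char, where M = 1]) simp
  moreover have "integral period_cube (fourier_char m) = (if m = 0 then V else 0)" for m :: "int^'n"
    using integral_unique[OF fourier_char_has_integral[of m]] by (simp add: V_def)
  then have "(\<lambda>j. c j * integral period_cube (fourier_char (j - k))) = (\<lambda>j. if j = k then c k * V else 0)"
    by (simp add: fun_eq_iff)
  moreover have "((\<lambda>j. if j = k then c k * V else 0) has_sum c k * V) UNIV"
    by (rule has_sum_finite_neutralI[of "{k}"]) simp_all
  ultimately have "integral period_cube (\<lambda>x. \<Sum>\<^sub>\<infinity>j. c j * fourier_char (j - k) x) = c k * V"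
    using has_sum_unique by simp
  then show ?thesis
    unfolding fourier_coeff_eq_integral shift by (simp add: V_def)
qed

lemma fourier_series_has_sum:
  fixes u :: "real^'n \<Rightarrow> complex"
  assumes tc: "torus_continuous u" and summable: "(\<lambda>k. norm (fourier_coeff u k)) summable_on UNIV"
  shows "((\<lambda>k. fourier_coeff u k * fourier_char k x) has_sum u x) UNIV"
proof -
  define W where "W x = (\<Sum>\<^sub>\<infinity>k. fourier_coeff u k * fourier_char k x)" for x
  have tcW: "torus_continuous W"
    unfolding W_def[abs_def] by (rule torus_continuous_infsum_char[OF summable])
  have "torus_continuous (\<lambda>x. u x - W x)"
    using tc tcW by (auto simp: torus_continuous_def intro: continuous_intros)
  moreover have "fourier_coeff (\<lambda>x. u x - W x) k = 0" for k
    using tc tcW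
    by (subst fourier_coeff_diff)
      (auto simp: torus_continuous_def W_def[abs_def] fourier_coeff_infsum_char[OF summable]
        intro: continuous_on_subset)
  ultimately have "u x = W x"
    using fourier_coeff_eq_0_imp_eq_0 by fastforce
  then show ?thesis
    using has_sum_infsum[OF summable_on_mult_bounded[OF summable, of "\<lambda>k. fourier_char k x" 1]]
    by (simp add: W_def)
qed

lemma fourier_coeff_mult_has_sum:
  fixes u v :: "real^'n \<Rightarrow> complex"
  assumes tcu: "torus_continuous u" and tcv: "torus_continuous v"
    and summable: "(\<lambda>k. norm (fourier_coeff v k)) summable_on UNIV"
  shows "((\<lambda>j. fourier_coeff u (k - j) * fourier_coeff v j) has_sum fourier_coeff (\<lambda>x. u x * v x) k) UNIV"
proof -
  define V where "V = complex_of_real ((2 * pi) ^ CARD('n))"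
  have cu: "continuous_on period_cube u"
    using tcu by (auto simp: torus_continuous_def intro: continuous_on_subset)
  obtain B where B: "\<And>x. x \<in> period_cube \<Longrightarrow> norm (u x) \<le> B"
    using compact_imp_bounded[OF compact_continuous_image[OF cu compact_cbox]] by (auto simp: bounded_iff)
  have expand: "u x * v x * fourier_char (- k) x =
      (\<Sum>\<^sub>\<infinity>j. fourier_coeff v j * (u x * fourier_char (j - k) x))" for x
  proof -
    have "u x * v x * fourier_char (- k) x =
        (u x * fourier_char (- k) x) * (\<Sum>\<^sub>\<infinity>j. fourier_coeff v j * fourier_char j x)"
      by (subst infsumI[OF fourier_series_has_sum[OF tcv summable]]) (simp add: mult_ac)
    also have "\<dots> = (\<Sum>\<^sub>\<infinity>j. (u x * fourier_char (- k) x) * (fourier_coeff v j * fourier_char j x))"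
      by (rule infsum_cmult_right[symmetric], rule summable_on_mult_bounded[OF summable, where M = 1]) simp
    also have "\<dots> = (\<Sum>\<^sub>\<infinity>j. fourier_coeff v j * (u x * fourier_char (j - k) x))"
      by (simp add: fourier_char_diff mult_ac)
    finally show ?thesis .
  qed
  have "((\<lambda>j. fourier_coeff v j * integral period_cube (\<lambda>x. u x * fourier_char (j - k) x)) has_sum
      integral period_cube (\<lambda>x. u x * v x * fourier_char (- k) x)) UNIV"
    unfolding expand
    by (rule has_sum_integral_infsum_mult_bounded[OF summable, where M = B])
      (use B cu in \<open>auto intro!: continuous_intros continuous_on_fourier_char simp: norm_mult\<close>)
  moreover have "integral period_cube (\<lambda>x. u x * fourier_char (j - k) x) = fourier_coeff u (k - j) * V" for j
    unfolding fourier_coeff_eq_integral V_def by simp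
  ultimately have "((\<lambda>j. (fourier_coeff u (k - j) * fourier_coeff v j) * V) has_sum
      fourier_coeff (\<lambda>x. u x * v x) k * V) UNIV"
    unfolding fourier_coeff_eq_integral[of "\<lambda>x. u x * v x"] by (simp add: V_def mult_ac)
  then have "((\<lambda>j. (fourier_coeff u (k - j) * fourier_coeff v j) * V * inverse V) has_sum
      fourier_coeff (\<lambda>x. u x * v x) k * V * inverse V) UNIV"
    by (rule has_sum_cmult_left)
  moreover have "V \<noteq> 0"
    by (simp add: V_def)
  then have "z * V * inverse V = z" for z
    by (simp flip: divide_inverse)
  ultimately show ?thesis
    by (simp only:)
qed

section \<open>Series of nonnegative extended reals\<close>

lemma infsum_cmult_right_ennreal:
  fixes f :: "'a \<Rightarrow> ennreal"
  shows "(\<Sum>\<^sub>\<infinity>x\<in>A. c * f x) = c * (\<Sum>\<^sub>\<infinity>x\<in>A. f x)"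
  by (simp add: nonneg_infsum_complete SUP_mult_left_ennreal sum_distrib_left)

lemma infsum_sum_ennreal:
  fixes f :: "'i \<Rightarrow> 'a \<Rightarrow> ennreal"
  assumes "finite I"
  shows "(\<Sum>\<^sub>\<infinity>x\<in>A. \<Sum>i\<in>I. f i x) = (\<Sum>i\<in>I. \<Sum>\<^sub>\<infinity>x\<in>A. f i x)"
  using assms by (induction I rule: finite_induct) (simp_all add: infsum_add nonneg_summable_on_complete)

lemma infsum_swap_le_ennreal:
  fixes f :: "'a \<Rightarrow> 'b \<Rightarrow> ennreal"
  shows "(\<Sum>\<^sub>\<infinity>x\<in>A. \<Sum>\<^sub>\<infinity>y\<in>B. f x y) \<le> (\<Sum>\<^sub>\<infinity>y\<in>B. \<Sum>\<^sub>\<infinity>x\<in>A. f x y)"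
proof -
  have "(\<Sum>\<^sub>\<infinity>x\<in>A. \<Sum>\<^sub>\<infinity>y\<in>B. f x y) = (SUP F\<in>{F. finite F \<and> F \<subseteq> A}. \<Sum>x\<in>F. \<Sum>\<^sub>\<infinity>y\<in>B. f x y)"
    by (rule nonneg_infsum_complete) simp
  also have "\<dots> \<le> (\<Sum>\<^sub>\<infinity>y\<in>B. \<Sum>\<^sub>\<infinity>x\<in>A. f x y)"
  proof (rule SUP_least)
    fix F
    assume F: "F \<in> {F. finite F \<and> F \<subseteq> A}"
    then have "(\<Sum>x\<in>F. \<Sum>\<^sub>\<infinity>y\<in>B. f x y) = (\<Sum>\<^sub>\<infinity>y\<in>B. \<Sum>x\<in>F. f x y)"
      by (simp add: infsum_sum_ennreal)
    also have "\<dots> \<le> (\<Sum>\<^sub>\<infinity>y\<in>B. \<Sum>\<^sub>\<infinity>x\<in>A. f x y)"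
    proof (rule infsum_mono)
      fix y
      have "(\<Sum>x\<in>F. f x y) = (\<Sum>\<^sub>\<infinity>x\<in>F. f x y)"
        using F by simp
      also have "\<dots> \<le> (\<Sum>\<^sub>\<infinity>x\<in>A. f x y)"
        using F by (intro infsum_mono_neutral nonneg_summable_on_complete) auto
      finally show "(\<Sum>x\<in>F. f x y) \<le> (\<Sum>\<^sub>\<infinity>x\<in>A. f x y)" .
    qed (simp_all add: nonneg_summable_on_complete)
    finally show "(\<Sum>x\<in>F. \<Sum>\<^sub>\<infinity>y\<in>B. f x y) \<le> (\<Sum>\<^sub>\<infinity>y\<in>B. \<Sum>\<^sub>\<infinity>x\<in>A. f x y)" .
  qed
  finally show ?thesis .
qed

lemma infsum_swap_ennreal:
  fixes f :: "'a \<Rightarrow> 'b \<Rightarrow> ennreal"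
  shows "(\<Sum>\<^sub>\<infinity>x\<in>A. \<Sum>\<^sub>\<infinity>y\<in>B. f x y) = (\<Sum>\<^sub>\<infinity>y\<in>B. \<Sum>\<^sub>\<infinity>x\<in>A. f x y)"
  by (intro antisym infsum_swap_le_ennreal)

lemma infsum_convolution_ennreal:
  fixes f g :: "'a::group_add \<Rightarrow> ennreal"
  shows "(\<Sum>\<^sub>\<infinity>k. \<Sum>\<^sub>\<infinity>j. f (k - j) * g j) = (\<Sum>\<^sub>\<infinity>k. f k) * (\<Sum>\<^sub>\<infinity>j. g j)"
proof -
  have shift: "(\<Sum>\<^sub>\<infinity>k. f (k - j)) = (\<Sum>\<^sub>\<infinity>k. f k)" for j
    by (rule infsum_reindex_bij_witness[of _ "\<lambda>k. k + j" "\<lambda>k. k - j"]) auto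
  have "(\<Sum>\<^sub>\<infinity>k. \<Sum>\<^sub>\<infinity>j. f (k - j) * g j) = (\<Sum>\<^sub>\<infinity>j. (\<Sum>\<^sub>\<infinity>k. f (k - j)) * g j)"
    by (subst infsum_swap_ennreal) (simp add: infsum_cmult_right_ennreal mult.commute)
  also have "\<dots> = (\<Sum>\<^sub>\<infinity>k. f k) * (\<Sum>\<^sub>\<infinity>j. g j)"
    by (simp add: shift infsum_cmult_right_ennreal)
  finally show ?thesis .
qed

lemma infsum_convolution_pair_ennreal:
  fixes f1 g1 f2 g2 :: "'a::group_add \<Rightarrow> ennreal"
  shows "(\<Sum>\<^sub>\<infinity>k. \<Sum>\<^sub>\<infinity>j. c * (f1 (k - j) * g1 j + f2 (k - j) * g2 j)) =
           c * ((\<Sum>\<^sub>\<infinity>k. f1 k) * (\<Sum>\<^sub>\<infinity>j. g1 j) + (\<Sum>\<^sub>\<infinity>k. f2 k) * (\<Sum>\<^sub>\<infinity>j. g2 j))"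
  by (simp add: infsum_cmult_right_ennreal infsum_add nonneg_summable_on_complete infsum_convolution_ennreal)

lemma ennreal_norm_has_sum_le:
  fixes f :: "'a \<Rightarrow> 'b::real_normed_vector"
  assumes "(f has_sum S) A"
  shows "ennreal (norm S) \<le> (\<Sum>\<^sub>\<infinity>x\<in>A. ennreal (norm (f x)))"
proof (rule tendsto_upperbound)
  show "((\<lambda>F. ennreal (norm (sum f F))) \<longlongrightarrow> ennreal (norm S)) (finite_subsets_at_top A)"
    using assms unfolding has_sum_def by (intro tendsto_ennrealI tendsto_norm)
  show "\<forall>\<^sub>F F in finite_subsets_at_top A. ennreal (norm (sum f F)) \<le> (\<Sum>\<^sub>\<infinity>x\<in>A. ennreal (norm (f x)))"
  proof (rule eventually_finite_subsets_at_top_weakI)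
    fix F
    assume "finite F" "F \<subseteq> A"
    have "ennreal (norm (sum f F)) \<le> ennreal (\<Sum>x\<in>F. norm (f x))"
      by (intro ennreal_leI norm_sum)
    also have "\<dots> = (\<Sum>\<^sub>\<infinity>x\<in>F. ennreal (norm (f x)))"
      using \<open>finite F\<close> by (simp add: sum_ennreal)
    also have "\<dots> \<le> (\<Sum>\<^sub>\<infinity>x\<in>A. ennreal (norm (f x)))"
      using \<open>F \<subseteq> A\<close> by (intro infsum_mono_neutral nonneg_summable_on_complete) auto
    finally show "ennreal (norm (sum f F)) \<le> (\<Sum>\<^sub>\<infinity>x\<in>A. ennreal (norm (f x)))" .
  qed
qed (simp add: finite_subsets_at_top_neq_bot)

lemma summable_on_if_ennreal_infsum_finite:
  fixes f :: "'a \<Rightarrow> real"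
  assumes nonneg: "\<And>x. x \<in> A \<Longrightarrow> f x \<ge> 0" and finite: "(\<Sum>\<^sub>\<infinity>x\<in>A. ennreal (f x)) < \<infinity>"
  shows "f summable_on A"
proof (rule nonneg_bdd_above_summable_on[OF nonneg])
  show "bdd_above (sum f ` {F. F \<subseteq> A \<and> finite F})"
  proof (rule bdd_aboveI2)
    fix F
    assume F: "F \<in> {F. F \<subseteq> A \<and> finite F}"
    then have "ennreal (sum f F) = (\<Sum>\<^sub>\<infinity>x\<in>F. ennreal (f x))"
      using nonneg by (auto simp: sum_ennreal subset_iff)
    also have "\<dots> \<le> (\<Sum>\<^sub>\<infinity>x\<in>A. ennreal (f x))"
      using F by (intro infsum_mono_neutral nonneg_summable_on_complete) auto
    finally have "enn2real (ennreal (sum f F)) \<le> enn2real (\<Sum>\<^sub>\<infinity>x\<in>A. ennreal (f x))"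
      by (rule enn2real_mono) (use finite in \<open>simp add: top.not_eq_extremum\<close>)
    moreover have "sum f F \<ge> 0"
      using F nonneg by (auto intro: sum_nonneg)
    ultimately show "sum f F \<le> enn2real (\<Sum>\<^sub>\<infinity>x\<in>A. ennreal (f x))"
      by simp
  qed
qed

section \<open>The product estimate\<close>

lemma powr_add_le_add_powr:
  fixes A B t :: real
  assumes "A > 0" "B > 0" "0 \<le> t" "t \<le> 1"
  shows "(A + B) powr t \<le> A powr t + B powr t"
proof -
  have "(A + B) powr t = (A + B) * (A + B) powr (t - 1)"
    using assms by (simp add: powr_diff)
  also have "\<dots> = A * (A + B) powr (t - 1) + B * (A + B) powr (t - 1)"
    by (simp add: distrib_right)
  also have "\<dots> \<le> A * A powr (t - 1) + B * B powr (t - 1)"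
    using assms by (intro add_mono mult_left_mono powr_mono2') auto
  also have "\<dots> = A powr t + B powr t"
    using assms by (simp add: powr_diff)
  finally show ?thesis .
qed

lemma powr_add_le_binomial_sum:
  fixes A B s :: real
  assumes A: "A > 0" and B: "B > 0" and s: "s \<ge> 0"
  shows "(A + B) powr s \<le> (\<Sum>m = 0..nat \<lfloor>s\<rfloor>. real (nat \<lfloor>s\<rfloor> choose m) *
           (A powr (s - real m) * B powr real m + B powr (s - real m) * A powr real m))"
proof -
  define N where "N = nat \<lfloor>s\<rfloor>"
  define t where "t = s - real N"
  have t: "0 \<le> t" "t \<le> 1"
    using s by (auto simp: t_def N_def) linarith+
  have s_eq: "s = real N + t"
    by (simp add: t_def)
  have split: "X powr (s - real m) = X ^ (N - m) * X powr t" if "X > 0" "m \<in> {0..N}" for X m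
    using that by (simp add: t_def powr_add[symmetric] powr_realpow[symmetric] of_nat_diff)
  have "(A + B) powr s = (A + B) ^ N * (A + B) powr t"
    using A B by (simp add: s_eq powr_add powr_realpow)
  also have "\<dots> \<le> (A + B) ^ N * (A powr t + B powr t)"
    using A B t by (intro mult_left_mono powr_add_le_add_powr) auto
  also have "\<dots> = (B + A) ^ N * A powr t + (A + B) ^ N * B powr t"
    by (simp add: algebra_simps)
  also have "\<dots> = (\<Sum>m = 0..N. real (N choose m) * (A powr (s - real m) * B powr real m)) +
      (\<Sum>m = 0..N. real (N choose m) * (B powr (s - real m) * A powr real m))"
    unfolding binomial_ring atMost_atLeast0 sum_distrib_right
    using A B by (intro arg_cong2[where f = "(+)"] sum.cong) (simp_all add: split powr_realpow mult_ac)
  finally show ?thesis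
    by (simp add: N_def sum.distrib[symmetric] distrib_left)
qed

definition fourier_weight :: "real \<Rightarrow> int^'n \<Rightarrow> ennreal" where
  "fourier_weight s k = ennreal ((1 + knorm1 k) powr s)"

lemma knorm1_nonneg: "knorm1 k \<ge> 0"
  unfolding knorm1_def by (intro sum_nonneg) simp

lemma knorm1_le_diff_add: "knorm1 k \<le> knorm1 (k - j) + knorm1 j"
  unfolding knorm1_def sum.distrib[symmetric] by (intro sum_mono) simp

lemma fourier_weight_zero [simp]: "fourier_weight 0 k = 1"
  using knorm1_nonneg[of k] by (simp add: fourier_weight_def)

lemma S_norm_eq_weighted_infsum:
  "S_norm s u = (\<Sum>\<^sub>\<infinity>k. fourier_weight s k * ennreal (norm (fourier_coeff u k)))"
  unfolding S_norm_def fourier_weight_def by (simp add: ennreal_mult)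

lemma fourier_weight_mono: "t \<le> s \<Longrightarrow> fourier_weight t k \<le> fourier_weight s k"
  unfolding fourier_weight_def using knorm1_nonneg[of k] by (intro ennreal_leI powr_mono) auto

lemma S_norm_mono: "t \<le> s \<Longrightarrow> S_norm t u \<le> S_norm s u"
  unfolding S_norm_eq_weighted_infsum
  by (intro infsum_mono nonneg_summable_on_complete mult_right_mono fourier_weight_mono) simp_all

lemma fourier_weight_le_binomial_sum:
  assumes "s \<ge> 0"
  shows "fourier_weight s k \<le> (\<Sum>m = 0..nat \<lfloor>s\<rfloor>. of_nat (nat \<lfloor>s\<rfloor> choose m) *
           (fourier_weight (s - real m) (k - j) * fourier_weight (real m) j +
            fourier_weight (s - real m) j * fourier_weight (real m) (k - j)))"
proof -
  have "(1 + knorm1 k) powr s \<le> ((1 + knorm1 (k - j)) + (1 + knorm1 j)) powr s"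
    using assms knorm1_nonneg[of k] knorm1_le_diff_add[of k j] by (intro powr_mono2) auto
  also have "\<dots> \<le> (\<Sum>m = 0..nat \<lfloor>s\<rfloor>. real (nat \<lfloor>s\<rfloor> choose m) *
      ((1 + knorm1 (k - j)) powr (s - real m) * (1 + knorm1 j) powr real m +
       (1 + knorm1 j) powr (s - real m) * (1 + knorm1 (k - j)) powr real m))"
    using knorm1_nonneg[of "k - j"] knorm1_nonneg[of j]
    by (intro powr_add_le_binomial_sum assms) auto
  finally show ?thesis
    unfolding fourier_weight_def
    by (subst (asm) ennreal_le_iff[symmetric])
      (simp_all add: sum_ennreal[symmetric] ennreal_mult ennreal_plus ennreal_of_nat_eq_real_of_nat
        sum_nonneg)
qed

lemma ennreal_norm_fourier_coeff_mult_le: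
  fixes u v :: "real^'n \<Rightarrow> complex"
  assumes "torus_continuous u" "torus_continuous v" "(\<lambda>k. norm (fourier_coeff v k)) summable_on UNIV"
  shows "ennreal (norm (fourier_coeff (\<lambda>x. u x * v x) k)) \<le>
           (\<Sum>\<^sub>\<infinity>j. ennreal (norm (fourier_coeff u (k - j))) * ennreal (norm (fourier_coeff v j)))"
  using ennreal_norm_has_sum_le[OF fourier_coeff_mult_has_sum[OF assms]]
  by (simp add: norm_mult ennreal_mult)

lemma S_norm_mult_le:
  fixes u v :: "real^'n \<Rightarrow> complex"
  assumes s: "s \<ge> 0" and tcu: "torus_continuous u" and tcv: "torus_continuous v"
    and summable: "(\<lambda>k. norm (fourier_coeff v k)) summable_on UNIV"
  shows "S_norm s (\<lambda>x. u x * v x) \<le>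
    (\<Sum>m = 0..nat \<lfloor>s\<rfloor>. of_nat (nat \<lfloor>s\<rfloor> choose m) *
      (S_norm (s - real m) u * S_norm (real m) v + S_norm (s - real m) v * S_norm (real m) u))"
proof -
  define N where "N = nat \<lfloor>s\<rfloor>"
  define C :: "nat \<Rightarrow> ennreal" where "C m = of_nat (N choose m)" for m
  define w where "w = (fourier_weight :: real \<Rightarrow> int^'n \<Rightarrow> ennreal)"
  define a where "a k = ennreal (norm (fourier_coeff u k))" for k
  define b where "b k = ennreal (norm (fourier_coeff v k))" for k
  have S_u: "S_norm t u = (\<Sum>\<^sub>\<infinity>k. w t k * a k)" and S_v: "S_norm t v = (\<Sum>\<^sub>\<infinity>k. w t k * b k)" for t
    by (simp_all add: S_norm_eq_weighted_infsum w_def a_def b_def)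
  have conv: "ennreal (norm (fourier_coeff (\<lambda>x. u x * v x) k)) \<le> (\<Sum>\<^sub>\<infinity>j. a (k - j) * b j)" for k
    unfolding a_def b_def by (rule ennreal_norm_fourier_coeff_mult_le[OF tcu tcv summable])
  define T where "T m k j = C m * ((w (s - real m) (k - j) * a (k - j)) * (w (real m) j * b j) +
      (w (real m) (k - j) * a (k - j)) * (w (s - real m) j * b j))" for m k j
  have "S_norm s (\<lambda>x. u x * v x) \<le> (\<Sum>\<^sub>\<infinity>k. \<Sum>\<^sub>\<infinity>j. w s k * (a (k - j) * b j))"
    unfolding S_norm_eq_weighted_infsum w_def[symmetric]
    by (intro infsum_mono nonneg_summable_on_complete)
      (simp_all add: infsum_cmult_right_ennreal conv mult_left_mono)
  also have "\<dots> \<le> (\<Sum>\<^sub>\<infinity>k. \<Sum>\<^sub>\<infinity>j. \<Sum>m = 0..N. T m k j)"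
  proof (intro infsum_mono nonneg_summable_on_complete zero_le)
    fix k j
    have "w s k * (a (k - j) * b j) \<le> (\<Sum>m = 0..N. C m * (w (s - real m) (k - j) * w (real m) j +
        w (s - real m) j * w (real m) (k - j))) * (a (k - j) * b j)"
      unfolding w_def C_def N_def by (intro mult_right_mono fourier_weight_le_binomial_sum s) simp
    also have "\<dots> = (\<Sum>m = 0..N. T m k j)"
      by (simp add: T_def sum_distrib_left sum_distrib_right algebra_simps)
    finally show "w s k * (a (k - j) * b j) \<le> (\<Sum>m = 0..N. T m k j)" .
  qed
  also have "\<dots> = (\<Sum>m = 0..N. \<Sum>\<^sub>\<infinity>k. \<Sum>\<^sub>\<infinity>j. T m k j)"
    by (simp add: infsum_sum_ennreal)
  also have "\<dots> = (\<Sum>m = 0..N. C m *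
      (S_norm (s - real m) u * S_norm (real m) v + S_norm (s - real m) v * S_norm (real m) u))"
  proof (rule sum.cong)
    fix m
    show "(\<Sum>\<^sub>\<infinity>k. \<Sum>\<^sub>\<infinity>j. T m k j) = C m *
        (S_norm (s - real m) u * S_norm (real m) v + S_norm (s - real m) v * S_norm (real m) u)"
      using infsum_convolution_pair_ennreal[of "C m" "\<lambda>k. w (s - real m) k * a k" "\<lambda>j. w (real m) j * b j"
          "\<lambda>k. w (real m) k * a k" "\<lambda>j. w (s - real m) j * b j"]
      by (simp add: T_def S_u S_v mult_ac)
  qed simp
  finally show ?thesis
    by (simp add: C_def N_def)
qed

theorem lemma4p2:
  fixes s :: real and u v :: "real^'n \<Rightarrow> complex"
  assumes "s \<ge> 0" and "u \<in> wiener_space s" and "v \<in> wiener_space s"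
  shows "S_norm s (\<lambda>x. u x * v x) \<le>
    2 * (\<Sum>m = 0..nat \<lfloor>s\<rfloor>. of_nat (nat \<lfloor>s\<rfloor> choose m) *
      (S_norm (s - real m) u * S_norm (real m) v + S_norm (s - real m) v * S_norm (real m) u))"
proof -
  have u: "torus_continuous u" and v: "torus_continuous v" "S_norm s v < \<infinity>"
    using assms(2,3) by (auto simp: wiener_space_def)
  have "S_norm 0 v < \<infinity>"
    using S_norm_mono[OF assms(1), of v] v(2) by simp
  then have "(\<lambda>k. norm (fourier_coeff v k)) summable_on UNIV"
    by (intro summable_on_if_ennreal_infsum_finite) (simp_all add: S_norm_eq_weighted_infsum)
  then have "S_norm s (\<lambda>x. u x * v x) \<le>
    (\<Sum>m = 0..nat \<lfloor>s\<rfloor>. of_nat (nat \<lfloor>s\<rfloor> choose m) *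
      (S_norm (s - real m) u * S_norm (real m) v + S_norm (s - real m) v * S_norm (real m) u))"
    by (rule S_norm_mult_le[OF assms(1) u v(1)])
  also have "\<dots> \<le> 2 * \<dots>"
    by (simp add: mult_2)
  finally show ?thesis .
qed

end
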